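(* Let $k\ge1$ be an integer. If $\mathcal S=\{a_1<\cdots<a_m\}\subset\mathbb N$ is a $\mathcal D_k$ set, then, as $m\to\infty$, $$a_m\ \ge\ (1+o(1))\,\frac{(k+1)^m}{2}\sqrt{\frac{6}{m\pi k(k+2)}}.$$ Consequently, for an infinite $\mathcal D_k$ set $\mathcal S\subseteq\mathbb N$, as $n\to\infty$, $$|\mathcal S(n)|\ \le\ \log_{k+1}n+\frac12\log_{k+1}\log_2 n+\frac12\log_{k+1}\left(\frac{2\pi}{3}k(k+2)\right)+o(1),$$ where $\mathcal S(n):=\mathcal S\cap[1,n]$.
   Context: For a positive integer $k$, a set $\mathcal S\subseteq\mathbb N$ is a $\mathcal D_k$ set if any equality $\sum_{s\in\mathcal S}\varepsilon_s s=0$ with $\varepsilon_s\in\{-k,\dots,-1,0,1,\dots,k\}$ (only finitely many nonzero) implies that all $\varepsilon_s$ are $0$. *)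

theory Defs
  imports Complex_Main
begin

definition D_set :: "nat \<Rightarrow> nat set \<Rightarrow> bool" where
  "D_set k S \<longleftrightarrow>
     (\<forall>\<epsilon> :: nat \<Rightarrow> int.
        finite {s \<in> S. \<epsilon> s \<noteq> 0} \<longrightarrow>
        (\<forall>s\<in>S. \<bar>\<epsilon> s\<bar> \<le> int k) \<longrightarrow>
        (\<Sum>s\<in>{s \<in> S. \<epsilon> s \<noteq> 0}. \<epsilon> s * int s) = 0 \<longrightarrow>
        (\<forall>s\<in>S. \<epsilon> s = 0))"

end

theory Submission
  imports Defs "HOL-Analysis.Complex_Transcendental"
begin

text \<open>If \<open>S = {a\<^sub>1 < \<dots> < a\<^sub>m}\<close> is a \<open>D\<^sub>k\<close> set, the \<open>N = (k+1)^m\<close> sums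
  \<open>\<Sum> \<epsilon>\<^sub>i a\<^sub>i\<close> with \<open>\<epsilon>\<^sub>i \<in> {0..k}\<close> are pairwise distinct, since the difference of two
  such sums is a relation with coefficients in \<open>[-k, k]\<close>. Any \<open>N\<close> distinct integers have
  variance at least \<open>(N\<^sup>2 - 1)/12\<close>, whereas for independent uniform \<open>\<epsilon>\<^sub>i\<close> the sum has
  variance \<open>k(k+2)/12 \<Sum> a\<^sub>i\<^sup>2 \<le> k(k+2)/12 m a\<^sub>m\<^sup>2\<close>. Hence
  \<open>(k+1)\<^bsup>2m\<^esup> \<le> 1 + k(k+2) m a\<^sub>m\<^sup>2\<close>, which gives the first claim even with \<open>o(1) = 0\<close>;
  applied to \<open>S \<inter> [1, n]\<close>, together with the crude consequence
  \<open>|S(n)| \<le> (3/2 + o(1)) log\<^sub>2 n\<close>, it gives the second. Variances are handled through the unnormalised form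
  \<open>\<Sum>\<^sub>x \<Sum>\<^sub>y (f x - f y)\<^sup>2 = 2 |A|\<^sup>2 Var f\<close>.\<close>

definition dispersion :: "'a set \<Rightarrow> ('a \<Rightarrow> real) \<Rightarrow> real" where
  "dispersion A f = (\<Sum>x\<in>A. \<Sum>y\<in>A. (f x - f y)^2)"

lemma dispersion_eq:
  "dispersion A f = 2 * real (card A) * (\<Sum>x\<in>A. (f x)^2) - 2 * (\<Sum>x\<in>A. f x)^2"
proof -
  have "dispersion A f = (\<Sum>x\<in>A. \<Sum>y\<in>A. (f x)^2 + (f y)^2 - 2 * f x * f y)"
    unfolding dispersion_def by (simp add: power2_diff)
  also have "\<dots> = real (card A) * (\<Sum>x\<in>A. (f x)^2) + real (card A) * (\<Sum>x\<in>A. (f x)^2)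
      - 2 * (\<Sum>x\<in>A. f x) * (\<Sum>x\<in>A. f x)"
    by (simp add: sum.distrib sum_subtractf sum_distrib_left[symmetric] sum_product mult.assoc)
  finally show ?thesis by (simp add: power2_eq_square)
qed

lemma dispersion_reindex:
  assumes "inj_on h B"
  shows "dispersion (h ` B) f = dispersion B (f \<circ> h)"
  using assms by (simp add: dispersion_def sum.reindex)

lemma dispersion_cong:
  assumes "\<And>x. x \<in> A \<Longrightarrow> f x = g x"
  shows "dispersion A f = dispersion A g"
  using assms unfolding dispersion_def by (simp cong: sum.cong)

lemma dispersion_scale: "dispersion A (\<lambda>x. c * f x) = c^2 * dispersion A f"
  by (simp add: dispersion_def sum_distrib_left power_mult_distrib
      right_diff_distrib[symmetric])

lemma dispersion_Times_plus:
  assumes "finite A" "finite B"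
  shows "dispersion (A \<times> B) (\<lambda>(x, y). u x + v y)
           = real (card B)^2 * dispersion A u + real (card A)^2 * dispersion B v"
proof -
  have sum: "(\<Sum>z\<in>A \<times> B. (\<lambda>(x, y). u x + v y) z) = real (card B) * sum u A + real (card A) * sum v B"
    by (simp add: sum.cartesian_product[symmetric] sum.distrib sum_distrib_left[symmetric])
  have "(\<Sum>z\<in>A \<times> B. ((\<lambda>(x, y). u x + v y) z)^2) = (\<Sum>x\<in>A. \<Sum>y\<in>B. (u x + v y)^2)"
    by (simp add: sum.cartesian_product split_def)
  also have "\<dots> = (\<Sum>x\<in>A. \<Sum>y\<in>B. (u x)^2 + (v y)^2 + 2 * (u x * v y))"
    by (simp add: power2_sum mult.assoc)
  also have "\<dots> = real (card B) * (\<Sum>x\<in>A. (u x)^2) + real (card A) * (\<Sum>y\<in>B. (v y)^2)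
      + 2 * (sum u A * sum v B)"
    by (simp add: sum.distrib sum_distrib_left[symmetric] sum_product)
  finally show ?thesis
    unfolding dispersion_eq sum card_cartesian_product by (simp add: algebra_simps power2_eq_square)
qed

lemma dispersion_lessThan: "dispersion {..<N} real = real N^2 * (real N^2 - 1) / 6"
proof -
  have sum: "(\<Sum>i<N. real i) = real N * (real N - 1) / 2"
    by (induction N) (auto simp: field_simps)
  have sum_squares: "(\<Sum>i<N. (real i)^2) = real N * (real N - 1) * (2 * real N - 1) / 6"
    by (induction N) (auto simp: field_simps power2_eq_square)
  show ?thesis
    unfolding dispersion_eq sum sum_squares by (simp add: field_simps power2_eq_square)
qed

lemma strict_sorted_nth_gap:
  assumes "sorted_wrt (<) (xs :: nat list)" "i \<le> j" "j < length xs"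
  shows "xs ! i + (j - i) \<le> xs ! j"
  using assms(2,3)
proof (induction j)
  case 0
  then show ?case by simp
next
  case (Suc j)
  show ?case
  proof (cases "i = Suc j")
    case False
    then have "xs ! i + (j - i) \<le> xs ! j" using Suc by simp
    moreover have "xs ! j < xs ! Suc j"
      using assms(1) Suc.prems by (simp add: sorted_wrt_nth_less)
    ultimately show ?thesis using False Suc.prems by linarith
  qed simp
qed

text \<open>Among sets of \<open>N\<close> naturals, the dispersion is smallest for \<open>{0..<N}\<close>, as
  listing the set increasingly does not decrease any distance.\<close>

lemma dispersion_nat_set_ge:
  assumes "finite (A :: nat set)"
  shows "real (card A)^2 * (real (card A)^2 - 1) / 6 \<le> dispersion A real"
proof -
  define xs where "xs = sorted_list_of_set A"
  define N where "N = card A"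
  have sorted: "sorted_wrt (<) xs" and len: "length xs = N" and set: "set xs = A"
    using assms by (simp_all add: xs_def N_def)
  have A: "A = nth xs ` {..<N}"
    using set len by (auto simp: set_conv_nth)
  have inj: "inj_on (nth xs) {..<N}"
    using sorted len by (intro inj_on_nth) (auto simp: strict_sorted_iff)
  have dist: "(real i - real j)^2 \<le> (real (xs ! i) - real (xs ! j))^2"
    if "i < N" "j < N" for i j
  proof -
    have "\<bar>real i - real j\<bar> \<le> \<bar>real (xs ! i) - real (xs ! j)\<bar>"
      using strict_sorted_nth_gap[OF sorted, of i j] strict_sorted_nth_gap[OF sorted, of j i]
        that len by (cases "i \<le> j") linarith+
    then show ?thesis by (simp add: abs_le_square_iff)
  qed
  have "dispersion {..<N} real \<le> dispersion {..<N} (real \<circ> nth xs)"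
    unfolding dispersion_def using dist by (intro sum_mono) auto
  also have "\<dots> = dispersion A real"
    unfolding A using inj by (rule dispersion_reindex[symmetric])
  finally show ?thesis unfolding dispersion_lessThan N_def .
qed

text \<open>This is the variance of \<open>\<Sum> \<epsilon>\<^sub>s w\<^sub>s\<close> for independent \<open>\<epsilon>\<^sub>s\<close> uniform on \<open>{0..k}\<close>.\<close>

lemma dispersion_PiE_weighted_sum:
  assumes "finite T"
  shows "dispersion (PiE T (\<lambda>_. {..k})) (\<lambda>f. \<Sum>s\<in>T. real (f s) * w s)
     = real ((k + 1) ^ card T)^2 * (real k * (real k + 2) / 6) * (\<Sum>s\<in>T. (w s)^2)"
  using assms
proof (induction T rule: finite_induct)
  case empty
  then show ?case by (simp add: dispersion_def)
next
  case (insert a T)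
  define E where "E = PiE T (\<lambda>_. {..k})"
  define \<phi> where "\<phi> = (\<lambda>f. \<Sum>s\<in>T. real (f s) * w s)"
  have "finite E" unfolding E_def using insert by (simp add: finite_PiE)
  have card_E: "card E = (k + 1) ^ card T" unfolding E_def using insert by (simp add: card_PiE)
  have split: "PiE (insert a T) (\<lambda>_. {..k}) = (\<lambda>(c, g). g(a := c)) ` ({..k} \<times> E)"
    unfolding E_def by (rule PiE_insert_eq)
  have inj: "inj_on (\<lambda>(c, g). g(a := c)) ({..k} \<times> E)"
    unfolding E_def using inj_combinator[OF insert(2), of "\<lambda>_. {..k}"] by simp
  have sum_upd: "(\<Sum>s\<in>insert a T. real ((g(a := c)) s) * w s) = real c * w a + \<phi> g" for c g
  proof -
    have "(\<Sum>s\<in>T. real ((g(a := c)) s) * w s) = \<phi> g"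
      unfolding \<phi>_def using insert(2) by (intro sum.cong) auto
    then show ?thesis using insert by simp
  qed
  have "dispersion (PiE (insert a T) (\<lambda>_. {..k})) (\<lambda>f. \<Sum>s\<in>insert a T. real (f s) * w s)
      = dispersion ({..k} \<times> E) (\<lambda>(c, g). real c * w a + \<phi> g)"
    unfolding split dispersion_reindex[OF inj]
    by (rule dispersion_cong) (auto simp: sum_upd simp del: fun_upd_apply)
  also have "\<dots> = real (card E)^2 * dispersion {..k} (\<lambda>c. w a * real c)
      + real (Suc k)^2 * dispersion E \<phi>"
    using dispersion_Times_plus[of "{..k}" E "\<lambda>c. real c * w a" \<phi>] \<open>finite E\<close>
    by (simp add: mult.commute)
  also have "dispersion {..k} (\<lambda>c. w a * real c) = (w a)^2 * dispersion {..<Suc k} real"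
    by (simp add: dispersion_scale lessThan_Suc_atMost)
  also have "dispersion E \<phi>
      = real ((k + 1) ^ card T)^2 * (real k * (real k + 2) / 6) * (\<Sum>s\<in>T. (w s)^2)"
    using insert.IH unfolding E_def \<phi>_def .
  finally show ?case
    unfolding dispersion_lessThan card_E using insert by (simp add: field_simps power2_eq_square)
qed

lemma D_set_subset:
  assumes "D_set k S" "T \<subseteq> S"
  shows "D_set k T"
  unfolding D_set_def
proof (intro allI impI)
  fix \<epsilon> :: "nat \<Rightarrow> int"
  assume fin: "finite {s \<in> T. \<epsilon> s \<noteq> 0}" and bound: "\<forall>s\<in>T. \<bar>\<epsilon> s\<bar> \<le> int k"
    and rel: "(\<Sum>s\<in>{s \<in> T. \<epsilon> s \<noteq> 0}. \<epsilon> s * int s) = 0"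
  define \<epsilon>' where "\<epsilon>' = (\<lambda>s. if s \<in> T then \<epsilon> s else 0)"
  have supp: "{s \<in> S. \<epsilon>' s \<noteq> 0} = {s \<in> T. \<epsilon> s \<noteq> 0}"
    using assms(2) by (auto simp: \<epsilon>'_def)
  have "(\<Sum>s\<in>{s \<in> S. \<epsilon>' s \<noteq> 0}. \<epsilon>' s * int s) = 0"
    unfolding supp using rel by (simp add: \<epsilon>'_def)
  moreover have "finite {s \<in> S. \<epsilon>' s \<noteq> 0}" unfolding supp by (rule fin)
  moreover have "\<forall>s\<in>S. \<bar>\<epsilon>' s\<bar> \<le> int k" using bound by (simp add: \<epsilon>'_def)
  ultimately have "\<forall>s\<in>S. \<epsilon>' s = 0"
    using assms(1) unfolding D_set_def by blast
  then show "\<forall>s\<in>T. \<epsilon> s = 0"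
    using assms(2) by (auto simp: \<epsilon>'_def split: if_splits)
qed

lemma D_set_inj_on_sums:
  assumes "D_set k S" "finite S"
  shows "inj_on (\<lambda>f. \<Sum>s\<in>S. f s * s) (PiE S (\<lambda>_. {..k}))"
proof (rule inj_onI)
  fix f g assume f: "f \<in> PiE S (\<lambda>_. {..k})" and g: "g \<in> PiE S (\<lambda>_. {..k})"
    and eq: "(\<Sum>s\<in>S. f s * s) = (\<Sum>s\<in>S. g s * s)"
  define \<epsilon> where "\<epsilon> = (\<lambda>s. int (f s) - int (g s))"
  have "(\<Sum>s\<in>{s \<in> S. \<epsilon> s \<noteq> 0}. \<epsilon> s * int s) = (\<Sum>s\<in>S. \<epsilon> s * int s)"
    using assms(2) by (simp add: sum.inter_filter) (intro sum.cong, auto)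
  also have "\<dots> = int (\<Sum>s\<in>S. f s * s) - int (\<Sum>s\<in>S. g s * s)"
    unfolding \<epsilon>_def by (simp add: sum_subtractf left_diff_distrib)
  finally have "(\<Sum>s\<in>{s \<in> S. \<epsilon> s \<noteq> 0}. \<epsilon> s * int s) = 0" using eq by simp
  moreover have "\<forall>s\<in>S. \<bar>\<epsilon> s\<bar> \<le> int k"
    using f g unfolding \<epsilon>_def by (force simp: PiE_iff)
  moreover have "finite {s \<in> S. \<epsilon> s \<noteq> 0}" using assms(2) by simp
  ultimately have "\<forall>s\<in>S. \<epsilon> s = 0"
    using assms(1) unfolding D_set_def by blast
  then show "f = g" by (intro PiE_ext[OF f g]) (auto simp: \<epsilon>_def)
qed

lemma D_set_power_le_sum_squares:
  assumes "D_set k S" "finite S"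
  shows "real ((k + 1) ^ card S)^2 - 1 \<le> real k * (real k + 2) * (\<Sum>s\<in>S. (real s)^2)"
proof -
  define E where "E = PiE S (\<lambda>_. {..k})"
  define \<psi> where "\<psi> = (\<lambda>f. \<Sum>s\<in>S. f s * s)"
  define N where "N = (k + 1) ^ card S"
  have inj: "inj_on \<psi> E" unfolding \<psi>_def E_def using D_set_inj_on_sums[OF assms] .
  have "finite E" "card E = N" unfolding E_def N_def using assms(2) by (simp_all add: card_PiE finite_PiE)
  then have "real N^2 * (real N^2 - 1) / 6 \<le> dispersion (\<psi> ` E) real"
    using dispersion_nat_set_ge[of "\<psi> ` E"] inj by (simp add: card_image)
  also have "\<dots> = dispersion E (\<lambda>f. \<Sum>s\<in>S. real (f s) * real s)"
    unfolding dispersion_reindex[OF inj] by (rule dispersion_cong) (simp add: \<psi>_def)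
  also have "\<dots> = real N^2 * (real k * (real k + 2) / 6) * (\<Sum>s\<in>S. (real s)^2)"
    unfolding E_def N_def using dispersion_PiE_weighted_sum[OF assms(2)] .
  finally have "real N^2 * (real N^2 - 1) \<le> real N^2 * (real k * (real k + 2) * (\<Sum>s\<in>S. (real s)^2))"
    by (simp add: field_simps)
  moreover have "real N^2 > 0" unfolding N_def by simp
  ultimately show ?thesis unfolding N_def[symmetric] by simp
qed

corollary D_set_power_le_bounded:
  assumes "D_set k S" "finite S" "\<forall>s\<in>S. s \<le> M"
  shows "real (k + 1) ^ (2 * card S) \<le> 1 + real k * (real k + 2) * real (card S) * real M^2"
proof -
  have "(\<Sum>s\<in>S. (real s)^2) \<le> real (card S) * real M^2"
    using sum_bounded_above[of S "\<lambda>s. (real s)^2" "real M^2"] assms(3) by (simp add: power_mono)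
  then have "real k * (real k + 2) * (\<Sum>s\<in>S. (real s)^2)
      \<le> real k * (real k + 2) * real (card S) * real M^2"
    by (simp add: mult.assoc mult_left_mono)
  moreover have "real (k + 1) ^ (2 * card S) = real ((k + 1) ^ card S)^2"
    by (simp add: power_mult[symmetric] mult.commute)
  ultimately show ?thesis
    using D_set_power_le_sum_squares[OF assms(1,2)] by linarith
qed

lemma D_set_Max_ge:
  assumes "k \<ge> 1" "D_set k S" "finite S"
  shows "real (k + 1) ^ card S / 2 * sqrt (6 / (real (card S) * pi * real k * real (k + 2)))
           \<le> real (Max S)"
proof (cases "card S = 0")
  case False
  define m where "m = card S"
  define N where "N = real (k + 1) ^ m"
  define M where "M = real (Max S)"
  define c where "c = real k * (real k + 2)"
  have "N^2 \<le> 1 + c * real m * M^2"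
    using D_set_power_le_bounded[OF assms(2,3), of "Max S"] assms(3)
    by (simp add: m_def N_def M_def c_def power_mult[symmetric] mult.commute)
  moreover have "2 \<le> N"
    using assms(1) False power_increasing[of 1 m "real (k + 1)"] by (simp add: m_def N_def M_def c_def)
  then have "4 \<le> N^2" using power_mono[of 2 N 2] by simp
  ultimately have "3/4 * N^2 \<le> c * real m * M^2" by linarith
  have cm: "c * real m > 0" using assms(1) False by (simp add: m_def N_def M_def c_def)
  have "(N/2)^2 * 6 = 3/2 * N^2" by (simp add: power2_eq_square)
  also have "\<dots> \<le> 2 * (c * real m * M^2)" using \<open>3/4 * N^2 \<le> c * real m * M^2\<close> by linarith
  also have "\<dots> \<le> pi * (c * real m * M^2)"
    using pi_ge_two cm by (intro mult_right_mono) auto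
  also have "\<dots> = M^2 * (real m * pi * real k * real (k + 2))"
    by (simp add: c_def algebra_simps)
  finally have "(N/2)^2 * 6 \<le> M^2 * (real m * pi * real k * real (k + 2))" .
  moreover have "0 < real m * pi * real k * real (k + 2)" using assms(1) False by (simp add: m_def)
  ultimately have bound: "(N/2)^2 * (6 / (real m * pi * real k * real (k + 2))) \<le> M^2"
    by (simp only: times_divide_eq_right pos_divide_le_eq)
  have "N/2 * sqrt (6 / (real m * pi * real k * real (k + 2)))
      = sqrt ((N/2)^2 * (6 / (real m * pi * real k * real (k + 2))))"
    using \<open>2 \<le> N\<close> by (simp only: real_sqrt_mult real_sqrt_abs)
  also have "\<dots> \<le> sqrt (M^2)" using bound by (rule real_sqrt_le_mono)
  finally show ?thesis by (simp add: m_def N_def M_def)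
qed simp

lemma D_set_initial_power_le:
  assumes "D_set k S"
  shows "real (k + 1) ^ (2 * card (S \<inter> {1..n}))
           \<le> 1 + real k * (real k + 2) * real (card (S \<inter> {1..n})) * real n^2"
proof -
  have "S \<inter> {1..n} \<subseteq> S" "finite (S \<inter> {1..n})" "\<forall>s\<in>S \<inter> {1..n}. s \<le> n" by auto
  then show ?thesis by (rule D_set_power_le_bounded[OF D_set_subset[OF assms]])
qed

lemma D_set_initial_card_le_log:
  assumes "k \<ge> 1" "D_set k S" "n \<ge> 1"
  shows "2 * real (card (S \<inter> {1..n})) \<le> log 2 (1 + real k * (real k + 2)) + 3 * log 2 (real n)"
proof -
  define m where "m = card (S \<inter> {1..n})"
  define c where "c = real k * (real k + 2)"
  have "m \<le> n" using card_mono[of "{1..n}" "S \<inter> {1..n}"] by (simp add: m_def)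
  have "(2::real) ^ (2 * m) \<le> real (k + 1) ^ (2 * m)"
    using assms(1) by (intro power_mono) auto
  also have "\<dots> \<le> 1 + c * real m * real n^2"
    using D_set_initial_power_le[OF assms(2)] by (simp add: m_def c_def)
  also have "\<dots> \<le> 1 * real n^3 + c * real n * real n^2"
    using \<open>m \<le> n\<close> assms(3) by (intro add_mono mult_right_mono mult_left_mono) (auto simp: m_def c_def)
  also have "\<dots> = (1 + c) * real n^3" by (simp add: algebra_simps power2_eq_square power3_eq_cube)
  finally have "2 * m \<le> log 2 ((1 + c) * real n^3)"
    by (intro le_log_of_power) auto
  moreover have "0 < 1 + c" by (simp add: c_def add_pos_nonneg)
  ultimately show ?thesis
    using assms(3) by (simp add: log_mult log_nat_power m_def c_def)
qed

lemma eventually_le_log_sequentially: "\<forall>\<^sub>F n in sequentially. C \<le> log 2 (real n)"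
  using eventually_ge_at_top[of "nat \<lceil>2 powr C\<rceil>"]
proof (rule eventually_mono)
  fix n assume "nat \<lceil>2 powr C\<rceil> \<le> n"
  then have "2 powr C \<le> real n" by linarith
  moreover have "0 < real n" using powr_gt_zero[of 2 C] \<open>2 powr C \<le> real n\<close> by linarith
  ultimately show "C \<le> log 2 (real n)" by (simp add: le_log_iff)
qed

lemma D_set_initial_card_bound:
  assumes "k \<ge> 1" "D_set k S"
  shows "\<forall>\<^sub>F n in sequentially. real (card (S \<inter> {1..n})) \<le>
           log (real (k + 1)) (real n) + 1/2 * log (real (k + 1)) (log 2 (real n))
           + 1/2 * log (real (k + 1)) (2 * pi / 3 * real k * real (k + 2))"
proof -
  define b where "b = real (k + 1)"
  define c where "c = real k * (real k + 2)"
  define K where "K = 2 * pi / 3 * real k * real (k + 2)"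
  have "c \<ge> 3" using assms(1) mult_mono[of 1 "real k" 3 "real k + 2"] by (simp add: c_def)
  have "0 < K" using assms(1) by (simp add: K_def)
  have "\<forall>\<^sub>F n in sequentially. 2 \<le> n \<and> 1 \<le> log 2 (real n)
          \<and> log 2 (1 + c) \<le> (pi - 3) * log 2 (real n)"
    using eventually_ge_at_top[of 2] eventually_le_log_sequentially[of 1]
      eventually_le_log_sequentially[of "log 2 (1 + c) / (pi - 3)"]
    by eventually_elim (use pi_gt3 in \<open>simp add: pos_divide_le_eq mult.commute\<close>)
  then show ?thesis
  proof (rule eventually_mono)
    fix n assume n: "2 \<le> n \<and> 1 \<le> log 2 (real n) \<and> log 2 (1 + c) \<le> (pi - 3) * log 2 (real n)"
    define l where "l = log 2 (real n)"
    define m where "m = card (S \<inter> {1..n})"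
    have "2 * real m \<le> log 2 (1 + c) + 3 * l"
      using D_set_initial_card_le_log[OF assms, of n] n by (simp add: l_def m_def c_def)
    then have m_le: "real m \<le> pi / 2 * l" using n by (simp add: l_def algebra_simps)
    have "1 \<le> pi / 6 * c * l * real n^2"
    proof -
      have "2 * 3 \<le> pi * c" using pi_ge_two \<open>c \<ge> 3\<close> by (intro mult_mono) auto
      moreover have "1 \<le> real n^2" using n by simp
      ultimately have "1 * 1 * 1 \<le> pi / 6 * c * l * real n^2"
        using n by (intro mult_mono) (auto simp: l_def)
      then show ?thesis by simp
    qed
    have "b ^ (2 * m) \<le> 1 + c * real m * real n^2"
      using D_set_initial_power_le[OF assms(2)] by (simp add: b_def c_def m_def)
    also have "\<dots> \<le> 1 + c * (pi / 2 * l) * real n^2"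
      using m_le \<open>c \<ge> 3\<close> by (intro add_left_mono mult_right_mono mult_left_mono) auto
    also have "\<dots> \<le> real n^2 * l * K"
      using \<open>1 \<le> pi / 6 * c * l * real n^2\<close> by (simp add: K_def c_def algebra_simps)
    finally have "2 * m \<le> log b (real n^2 * l * K)"
      using assms(1) by (intro le_log_of_power) (auto simp: b_def)
    also have "\<dots> = 2 * log b (real n) + log b l + log b K"
      using n \<open>0 < K\<close> by (simp add: log_mult log_nat_power l_def)
    finally show "real (card (S \<inter> {1..n})) \<le>
        log (real (k + 1)) (real n) + 1/2 * log (real (k + 1)) (log 2 (real n))
        + 1/2 * log (real (k + 1)) (2 * pi / 3 * real k * real (k + 2))"
      by (simp add: b_def l_def m_def K_def)
  qed
qed

theorem theorem6:
  fixes k :: nat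
  assumes "k \<ge> 1"
  shows "(\<exists>g :: nat \<Rightarrow> real. g \<longlonglongrightarrow> 0 \<and>
            (\<forall>\<^sub>F m in sequentially. \<forall>S. D_set k S \<and> finite S \<and> card S = m \<longrightarrow>
               real (Max S) \<ge> (1 + g m) * (real (k + 1) ^ m / 2) *
                 sqrt (6 / (real m * pi * real k * real (k + 2)))))
       \<and> (\<forall>S. D_set k S \<and> infinite S \<longrightarrow>
            (\<exists>g :: nat \<Rightarrow> real. g \<longlonglongrightarrow> 0 \<and>
              (\<forall>\<^sub>F n in sequentially.
                 real (card (S \<inter> {1..n})) \<le>
                   log (real (k + 1)) (real n)
                   + 1/2 * log (real (k + 1)) (log 2 (real n))
                   + 1/2 * log (real (k + 1)) (2 * pi / 3 * real k * real (k + 2))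
                   + g n)))"
proof (intro conjI allI impI exI[of _ "\<lambda>_. 0"] tendsto_const)
  show "\<forall>\<^sub>F m in sequentially. \<forall>S. D_set k S \<and> finite S \<and> card S = m \<longrightarrow>
          real (Max S) \<ge> (1 + 0) * (real (k + 1) ^ m / 2) *
            sqrt (6 / (real m * pi * real k * real (k + 2)))"
    by (intro always_eventually) (auto dest: D_set_Max_ge[OF assms])
  fix S assume "D_set k S \<and> infinite S"
  then show "\<forall>\<^sub>F n in sequentially. real (card (S \<inter> {1..n})) \<le>
      log (real (k + 1)) (real n) + 1/2 * log (real (k + 1)) (log 2 (real n))
      + 1/2 * log (real (k + 1)) (2 * pi / 3 * real k * real (k + 2)) + 0"
    using D_set_initial_card_bound[OF assms] by simp
qed

end
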